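(* Let $p,q\ge1$, $u\in\mathfrak{S}_p$, $v\in\mathfrak{S}_q$. For $w\in\mathfrak{S}_{p+q}$ let $A^w_{u,v}$ be the set of $\zeta\in\mathfrak{S}^{(p,q)}$ such that (i) $(u\times v)\cdot\zeta^{-1}\le w$, and (ii) whenever $u'\in\mathfrak{S}_p$, $v'\in\mathfrak{S}_q$ satisfy $u\le u'$, $v\le v'$ and $(u'\times v')\cdot\zeta^{-1}\le w$, then $u'=u$ and $v'=v$. Let $\alpha^w_{u,v}=\#A^w_{u,v}$. Then $$\mathcal{M}_u\cdot\mathcal{M}_v=\sum_{w\in\mathfrak{S}_{p+q}}\alpha^w_{u,v}\,\mathcal{M}_w .$$
   Context: Permutations in one-line notation, product is composition. For $u\in\mathfrak{S}_p,v\in\mathfrak{S}_q$, $u\times v\in\mathfrak{S}_{p+q}$ has $(u\times v)(i)=u_i$ ($i\le p$), $(u\times v)(p+j)=p+v_j$. $\mathfrak{S}^{(p,q)}=\{\zeta\in\mathfrak{S}_{p+q}:\zeta_1<\cdots<\zeta_p,\zeta_{p+1}<\cdots<\zeta_{p+q}\}$. $\mathrm{st}(a_1,\ldots,a_m)\in\mathfrak{S}_m$ is the permutation with the same relative order as the distinct integers $a_i$. $\mathfrak{S}Sym$ is the graded Hopf algebra over $\mathbb{Q}$ with basis $\{\mathcal{F}_u:u\in\mathfrak{S}_n,n\ge0\}$, product $\mathcal{F}_u\cdot\mathcal{F}_v=\sum_{\zeta\in\mathfrak{S}^{(p,q)}}\mathcal{F}_{(u\times v)\cdot\zeta^{-1}}$,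 coproduct $\Delta(\mathcal{F}_u)=\sum_{p=0}^n\mathcal{F}_{\mathrm{st}(u_1..u_p)}\otimes\mathcal{F}_{\mathrm{st}(u_{p+1}..u_n)}$. Weak order: $u\le v$ iff $\mathrm{Inv}(u)\subseteq\mathrm{Inv}(v)$, $\mathrm{Inv}(u)=\{(i,j):i<j,u_i>u_j\}$, Möbius function $\mu$. Monomial basis: $\mathcal{M}_u=\sum_{v\ge u}\mu(u,v)\mathcal{F}_v$, equivalently $\mathcal{F}_u=\sum_{v\ge u}\mathcal{M}_v$. *)

theory Defs
  imports Complex_Main
begin

text \<open>Permutations in one-line notation: lists of the values 1..n.\<close>

definition Perms :: "nat \<Rightarrow> nat list set" where
  "Perms n = {w. distinct w \<and> set w = {1..n}}"

text \<open>Composition: (u \<cdot> v)(i) = u(v(i)).\<close>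
definition pcomp :: "nat list \<Rightarrow> nat list \<Rightarrow> nat list" where
  "pcomp u v = map (\<lambda>i. u ! (i - 1)) v"

definition pinv :: "nat list \<Rightarrow> nat list" where
  "pinv u = map (\<lambda>i. Suc (THE j. j < length u \<and> u ! j = i)) [1..<Suc (length u)]"

definition pcross :: "nat list \<Rightarrow> nat list \<Rightarrow> nat list" where
  "pcross u v = u @ map (\<lambda>j. length u + j) v"

definition Shuf :: "nat \<Rightarrow> nat \<Rightarrow> nat list set" where
  "Shuf p q = {z \<in> Perms (p + q). sorted_wrt (<) (take p z) \<and> sorted_wrt (<) (drop p z)}"

text \<open>Inversions (0-based positions) and the weak order.\<close>
definition Inv :: "nat list \<Rightarrow> (nat \<times> nat) set" where
  "Inv u = {(i, j). i < j \<and> j < length u \<and> u ! i > u ! j}"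

definition weak_le :: "nat list \<Rightarrow> nat list \<Rightarrow> bool" where
  "weak_le u v \<longleftrightarrow> Inv u \<subseteq> Inv v"

definition weak_lt :: "nat list \<Rightarrow> nat list \<Rightarrow> bool" where
  "weak_lt u v \<longleftrightarrow> Inv u \<subset> Inv v"

lemma finite_Inv: "finite (Inv u)"
  by (rule finite_subset[of _ "{..<length u} \<times> {..<length u}"]) (auto simp: Inv_def)

function mobius :: "nat list \<Rightarrow> nat list \<Rightarrow> int" where
  "mobius u v = (if u = v then 1
     else if weak_lt u v then
       - (\<Sum>w\<in>{w \<in> Perms (length u). weak_le u w \<and> weak_lt w v}. mobius u w)
     else 0)"
  by auto
termination
  by (relation "measure (\<lambda>(u, v). card (Inv v))")
     (auto simp: weak_lt_def intro: psubset_card_mono finite_Inv)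

text \<open>Homogeneous elements of degree n of SSym are coefficient functions on the
  F-basis, i.e. f = \<Sum>_w f(w) F_w.\<close>

definition FF :: "nat list \<Rightarrow> nat list \<Rightarrow> rat" where
  "FF u = (\<lambda>w. if w = u then 1 else 0)"

definition MM :: "nat list \<Rightarrow> nat list \<Rightarrow> rat" where
  "MM u = (\<lambda>w. if w \<in> Perms (length u) \<and> weak_le u w then of_int (mobius u w) else 0)"

text \<open>Product of a degree-p element and a degree-q element (bilinear extension of
  F_u F_v = \<Sum>_{\<zeta>\<in>S^(p,q)} F_{(u\<times>v)\<zeta>^{-1}}).\<close>
definition sprod :: "nat \<Rightarrow> nat \<Rightarrow> (nat list \<Rightarrow> rat) \<Rightarrow> (nat list \<Rightarrow> rat) \<Rightarrow> (nat list \<Rightarrow> rat)" where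
  "sprod p q f g = (\<lambda>w. \<Sum>u\<in>Perms p. \<Sum>v\<in>Perms q. \<Sum>z\<in>Shuf p q.
      if pcomp (pcross u v) (pinv z) = w then f u * g v else 0)"

definition Aset :: "nat \<Rightarrow> nat \<Rightarrow> nat list \<Rightarrow> nat list \<Rightarrow> nat list \<Rightarrow> nat list set" where
  "Aset p q u v w = {z \<in> Shuf p q.
      weak_le (pcomp (pcross u v) (pinv z)) w \<and>
      (\<forall>u'\<in>Perms p. \<forall>v'\<in>Perms q.
         weak_le u u' \<and> weak_le v v' \<and> weak_le (pcomp (pcross u' v') (pinv z)) w
         \<longrightarrow> u' = u \<and> v' = v)}"

definition alpha :: "nat \<Rightarrow> nat \<Rightarrow> nat list \<Rightarrow> nat list \<Rightarrow> nat list \<Rightarrow> nat" where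
  "alpha p q u v w = card (Aset p q u v w)"

end

theory Submission
  imports Defs
begin

(* The sums of the F-coefficients of an element of degree n over the lower weak-order intervals
   [_, y] determine the element, and for M_w this sum is [w = y] by the recursion defining the
   Moebius function. So it suffices to compare these interval sums for both sides.

   For a shuffle z, the inversions of (u' x v') z^-1 are those of z^-1 together with the
   inversions of u' and of v' transported along z. Hence (u' x v') z^-1 <= y iff z^-1 <= y,
   u' <= st (y_z(1) .. y_z(p)) and v' <= st (y_z(p+1) .. y_z(p+q)): the admissible pairs (u', v')
   form a product of two lower intervals. Summing M_u(u') M_v(v') over it gives 1 if (u, v) is
   its top and 0 otherwise, and the shuffles z with z^-1 <= y whose top is (u, v) are exactly
   the elements of A^y_{u,v}. *)

declare mobius.simps[simp del]

lemma Perms_eq: "Perms n = {w. length w = n \<and> set w = {1..n}}"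
proof -
  have "distinct w" if "length w = n" "set w = {1..n}" for w
    using that by (intro card_distinct) simp
  moreover have "length w = n" if "distinct w" "set w = {1..n}" for w
    using that distinct_card by fastforce
  ultimately show ?thesis unfolding Perms_def by blast
qed

lemma length_Perms: "w \<in> Perms n \<Longrightarrow> length w = n"
  by (simp add: Perms_eq)

lemma finite_Perms: "finite (Perms n)"
  unfolding Perms_eq by (rule finite_subset[OF _ finite_lists_length_eq[of "{1..n}" n]]) auto

lemma Perms_nth: "w \<in> Perms n \<Longrightarrow> i < n \<Longrightarrow> w ! i \<in> {1..n}"
  by (auto simp: Perms_eq)

lemma nth_eq_card_le_Perms:
  assumes w: "w \<in> Perms n" and i: "i < n"
  shows "w ! i = card {j. j < n \<and> w ! j \<le> w ! i}"
proof -
  have len: "length w = n" and dist: "distinct w" using w by (auto simp: Perms_def length_Perms)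
  have "(!) w ` {j. j < n \<and> w ! j \<le> w ! i} = {k \<in> set w. k \<le> w ! i}"
    using len by (auto simp: in_set_conv_nth)
  also have "\<dots> = {1..w ! i}"
    using w Perms_nth[OF w i] by (auto simp: Perms_def)
  finally show ?thesis
    using card_image[OF inj_on_nth[OF dist, of "{j. j < n \<and> w ! j \<le> w ! i}"]] len by simp
qed

lemma nth_le_nth_iff_Inv:
  assumes "distinct w" and "i < length w" and "j < length w"
  shows "w ! j \<le> w ! i \<longleftrightarrow> j = i \<or> (j < i \<and> (j, i) \<notin> Inv w) \<or> (i < j \<and> (i, j) \<in> Inv w)"
proof -
  have "w ! j \<noteq> w ! i" if "j \<noteq> i" using assms that by (simp add: nth_eq_iff_index_eq)
  then show ?thesis using assms by (cases j i rule: linorder_cases) (auto simp: Inv_def)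
qed

lemma Inv_inject:
  assumes u: "u \<in> Perms n" and v: "v \<in> Perms n" and eq: "Inv u = Inv v"
  shows "u = v"
proof (rule nth_equalityI)
  show len: "length u = length v" using u v by (simp add: length_Perms)
  fix i assume "i < length u"
  then have i: "i < n" using u by (simp add: length_Perms)
  have "{j. j < n \<and> u ! j \<le> u ! i} = {j. j < n \<and> v ! j \<le> v ! i}"
    using u v i eq by (auto simp: Perms_def length_Perms nth_le_nth_iff_Inv)
  then show "u ! i = v ! i"
    using nth_eq_card_le_Perms[OF u i] nth_eq_card_le_Perms[OF v i] by simp
qed

lemma weak_le_antisym: "u \<in> Perms n \<Longrightarrow> v \<in> Perms n \<Longrightarrow> weak_le u v \<Longrightarrow> weak_le v u \<Longrightarrow> u = v"
  using Inv_inject unfolding weak_le_def by blast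

lemma sum_mobius_interval:
  assumes u: "u \<in> Perms n" and y: "y \<in> Perms n"
  shows "(\<Sum>x\<in>{x \<in> Perms n. weak_le u x \<and> weak_le x y}. mobius u x) = (if u = y then 1 else 0)"
proof (cases "weak_le u y")
  case False
  then have empty: "{x \<in> Perms n. weak_le u x \<and> weak_le x y} = {}" and "u \<noteq> y"
    by (auto simp: weak_le_def)
  then show ?thesis by (simp only: empty) simp
next
  case le: True
  show ?thesis
  proof (cases "u = y")
    case True
    then have "{x \<in> Perms n. weak_le u x \<and> weak_le x y} = {u}"
      using weak_le_antisym[OF u] u by (auto simp: weak_le_def)
    then show ?thesis using True by (simp add: mobius.simps)
  next
    case False
    define B where "B = {x \<in> Perms (length u). weak_le u x \<and> weak_lt x y}"
    have "weak_lt u y" using le False Inv_inject[OF u y] by (auto simp: weak_le_def weak_lt_def)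
    then have "mobius u y = - sum (mobius u) B"
      unfolding B_def using False by (subst mobius.simps) simp
    moreover have "{x \<in> Perms n. weak_le u x \<and> weak_le x y} = insert y B"
      unfolding B_def using le y Inv_inject[OF _ y] by (auto simp: length_Perms[OF u] weak_le_def weak_lt_def)
    moreover have "y \<notin> B" and "finite B" unfolding B_def by (auto simp: weak_lt_def finite_Perms)
    ultimately show ?thesis using False by simp
  qed
qed

lemma sum_MM_weak_le:
  assumes u: "u \<in> Perms n" and y: "y \<in> Perms n"
  shows "(\<Sum>x\<in>{x \<in> Perms n. weak_le x y}. MM u x) = (if u = y then 1 else 0)"
proof -
  have "(\<Sum>x\<in>{x \<in> Perms n. weak_le x y}. MM u x)
      = (\<Sum>x\<in>{x \<in> Perms n. weak_le u x \<and> weak_le x y}. of_int (mobius u x))"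
    by (rule sum.mono_neutral_cong_right) (auto simp: MM_def length_Perms[OF u] finite_Perms)
  also have "\<dots> = (if u = y then 1 else 0)"
    using sum_mobius_interval[OF u y] by (simp flip: of_int_sum)
  finally show ?thesis .
qed

lemma sum_weak_le_MM_combination:
  assumes y: "y \<in> Perms n"
  shows "(\<Sum>x\<in>{x \<in> Perms n. weak_le x y}. \<Sum>w\<in>Perms n. c w * MM w x) = c y"
proof -
  have "(\<Sum>x\<in>{x \<in> Perms n. weak_le x y}. \<Sum>w\<in>Perms n. c w * MM w x)
      = (\<Sum>w\<in>Perms n. c w * (\<Sum>x\<in>{x \<in> Perms n. weak_le x y}. MM w x))"
    by (subst sum.swap) (simp add: sum_distrib_left)
  also have "\<dots> = (\<Sum>w\<in>Perms n. if w = y then c w else 0)"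
    using y by (intro sum.cong) (auto simp: sum_MM_weak_le)
  also have "\<dots> = c y" using y by (simp add: finite_Perms)
  finally show ?thesis .
qed

lemma eq_if_sum_weak_le_eq:
  fixes f g :: "nat list \<Rightarrow> 'a::ab_group_add"
  assumes f0: "\<And>x. x \<notin> Perms n \<Longrightarrow> f x = 0" and g0: "\<And>x. x \<notin> Perms n \<Longrightarrow> g x = 0"
    and sums: "\<And>y. y \<in> Perms n \<Longrightarrow>
      (\<Sum>x\<in>{x \<in> Perms n. weak_le x y}. f x) = (\<Sum>x\<in>{x \<in> Perms n. weak_le x y}. g x)"
  shows "f = g"
proof
  have on_Perms: "f y = g y" if "y \<in> Perms n" for y
    using that
  proof (induction "card (Inv y)" arbitrary: y rule: less_induct)
    case less
    let ?B = "{x \<in> Perms n. weak_le x y \<and> x \<noteq> y}"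
    have "f x = g x" if x: "x \<in> ?B" for x
    proof -
      have "Inv x \<subset> Inv y" using x Inv_inject[OF _ less.prems, of x] by (auto simp: weak_le_def)
      then show ?thesis using less.hyps x psubset_card_mono[OF finite_Inv] by blast
    qed
    then have "sum f ?B = sum g ?B" by (rule sum.cong[OF refl])
    moreover have "{x \<in> Perms n. weak_le x y} = insert y ?B" using less.prems by (auto simp: weak_le_def)
    ultimately show ?case using sums[OF less.prems] by (simp add: finite_Perms)
  qed
  show "f x = g x" for x
    using on_Perms[of x] f0[of x] g0[of x] by (cases "x \<in> Perms n") simp_all
qed

definition st :: "nat list \<Rightarrow> nat list" where
  "st xs = map (\<lambda>a. card {b \<in> set xs. b \<le> a}) xs"

lemma card_le_less_card_le_iff:
  fixes A :: "nat set"
  assumes "finite A" and "a \<in> A" and "b \<in> A"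
  shows "card {c \<in> A. c \<le> a} < card {c \<in> A. c \<le> b} \<longleftrightarrow> a < b"
proof
  assume "a < b"
  then have "{c \<in> A. c \<le> a} \<subseteq> {c \<in> A. c \<le> b}" and "b \<notin> {c \<in> A. c \<le> a}"
    by auto
  then have "{c \<in> A. c \<le> a} \<subset> {c \<in> A. c \<le> b}" using assms by blast
  then show "card {c \<in> A. c \<le> a} < card {c \<in> A. c \<le> b}"
    using assms by (intro psubset_card_mono) auto
next
  assume "card {c \<in> A. c \<le> a} < card {c \<in> A. c \<le> b}"
  moreover have "card {c \<in> A. c \<le> b} \<le> card {c \<in> A. c \<le> a}" if "b \<le> a"
    using that assms by (intro card_mono) auto
  ultimately show "a < b" by linarith
qed

lemma st_nth_less_iff:
  "i < length xs \<Longrightarrow> j < length xs \<Longrightarrow> st xs ! i < st xs ! j \<longleftrightarrow> xs ! i < xs ! j"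
  by (simp add: st_def card_le_less_card_le_iff)

lemma length_st [simp]: "length (st xs) = length xs"
  by (simp add: st_def)

lemma Inv_st: "Inv (st xs) = Inv xs"
  unfolding Inv_def by (auto simp: st_nth_less_iff)

lemma st_Perms:
  assumes "distinct xs"
  shows "st xs \<in> Perms (length xs)"
proof -
  let ?r = "\<lambda>a. card {b \<in> set xs. b \<le> a}"
  have "inj_on ?r (set xs)"
  proof (rule inj_onI)
    fix a b assume "a \<in> set xs" "b \<in> set xs" "?r a = ?r b"
    then show "a = b"
      using card_le_less_card_le_iff[of "set xs" a b] card_le_less_card_le_iff[of "set xs" b a] by auto
  qed
  then have dist: "distinct (st xs)" using assms by (simp add: st_def distinct_map)
  have "?r a \<in> {1..length xs}" if "a \<in> set xs" for a
  proof -
    have "0 < ?r a" using that by (auto simp: card_gt_0_iff)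
    moreover have "?r a \<le> card (set xs)" by (rule card_mono) auto
    ultimately show ?thesis using distinct_card[OF assms] by simp
  qed
  then have "set (st xs) \<subseteq> {1..length xs}" by (auto simp: st_def)
  moreover have "card (set (st xs)) = card {1..length xs}"
    using distinct_card[OF dist] by simp
  ultimately have "set (st xs) = {1..length xs}" by (intro card_subset_eq) auto
  then show ?thesis using dist by (simp add: Perms_def)
qed

lemma Perms_obtain_nth:
  assumes "w \<in> Perms n" and "k \<in> {1..n}"
  obtains i where "i < n" and "w ! i = k"
proof -
  have "k \<in> set w" using assms by (simp add: Perms_eq)
  then show thesis using that length_Perms[OF assms(1)] by (auto simp: in_set_conv_nth)
qed

lemma length_pcomp [simp]: "length (pcomp c x) = length x"
  by (simp add: pcomp_def)

lemma pcomp_nth: "i < length x \<Longrightarrow> pcomp c x ! i = c ! (x ! i - 1)"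
  by (simp add: pcomp_def)

lemma pcomp_Perms:
  assumes c: "c \<in> Perms n" and x: "x \<in> Perms n"
  shows "pcomp c x \<in> Perms n"
proof -
  have "set (pcomp c x) = (\<lambda>i. c ! (i - 1)) ` {1..n}"
    using x by (simp add: pcomp_def Perms_eq)
  also have "\<dots> = set c"
  proof
    show "(\<lambda>i. c ! (i - 1)) ` {1..n} \<subseteq> set c"
      using length_Perms[OF c] by (auto intro!: nth_mem)
    show "set c \<subseteq> (\<lambda>i. c ! (i - 1)) ` {1..n}"
    proof
      fix k assume "k \<in> set c"
      then obtain j where "j < n" "k = c ! j" using length_Perms[OF c] by (auto simp: in_set_conv_nth)
      then show "k \<in> (\<lambda>i. c ! (i - 1)) ` {1..n}" by (intro image_eqI[of _ _ "Suc j"]) auto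
    qed
  qed
  finally show ?thesis using c x by (simp add: Perms_eq)
qed

lemma pcomp_upt_left: "x \<in> Perms n \<Longrightarrow> pcomp [1..<Suc n] x = x"
  unfolding pcomp_def by (rule map_idI) (auto simp: Perms_eq simp del: upt_Suc)

lemma pinv_nth:
  assumes z: "z \<in> Perms n" and i: "i < n"
  shows "pinv z ! (z ! i - 1) = Suc i"
proof -
  have len: "length z = n" and zi: "z ! i \<in> {1..n}" using z i by (auto simp: Perms_eq)
  have "(THE j. j < length z \<and> z ! j = z ! i) = i"
    using z i len by (intro the_equality) (auto simp: Perms_def nth_eq_iff_index_eq)
  then show ?thesis using zi len unfolding pinv_def by (auto simp del: upt_Suc)
qed

lemma pinv_Perms:
  assumes z: "z \<in> Perms n"
  shows "pinv z \<in> Perms n"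
proof -
  have len: "length (pinv z) = n" using z by (simp add: pinv_def length_Perms del: upt_Suc)
  have "pinv z ! a \<in> {1..n}" if "a < n" for a
  proof -
    from that have "Suc a \<in> {1..n}" by simp
    then obtain i where "i < n" "z ! i = Suc a" by (rule Perms_obtain_nth[OF z])
    then show ?thesis using pinv_nth[OF z] by force
  qed
  moreover have "k \<in> set (pinv z)" if "k \<in> {1..n}" for k
  proof -
    have i: "k - 1 < n" using that by auto
    have "pinv z ! (z ! (k - 1) - 1) = k" using pinv_nth[OF z i] that by simp
    moreover have "z ! (k - 1) - 1 < length (pinv z)" using Perms_nth[OF z i] len by auto
    ultimately show ?thesis by (metis nth_mem)
  qed
  ultimately show ?thesis using len by (auto simp: Perms_eq in_set_conv_nth)
qed

lemma pcomp_pinv_nth: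
  assumes "z \<in> Perms n" and "i < n"
  shows "pcomp c (pinv z) ! (z ! i - 1) = c ! i"
  using assms pinv_nth[OF assms] Perms_nth[OF assms] pinv_Perms[OF assms(1)]
  by (auto simp: pcomp_nth length_Perms)

lemma Inv_pcomp_pinv:
  assumes z: "z \<in> Perms n" and c: "length c = n"
  shows "Inv (pcomp c (pinv z)) =
    (\<lambda>(i, j). (z ! i - 1, z ! j - 1)) ` {(i, j). i < n \<and> j < n \<and> z ! i < z ! j \<and> c ! j < c ! i}"
proof (intro equalityI subsetI)
  let ?x = "pcomp c (pinv z)"
  have len: "length ?x = n" using pinv_Perms[OF z] by (simp add: length_Perms)
  fix ab assume "ab \<in> Inv ?x"
  then obtain a b where ab: "ab = (a, b)" "a < b" "b < n" "?x ! b < ?x ! a" using len by (auto simp: Inv_def)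
  have "Suc a \<in> {1..n}" "Suc b \<in> {1..n}" using ab by auto
  then obtain i j where i: "i < n" "z ! i = Suc a" and j: "j < n" "z ! j = Suc b"
    by (metis Perms_obtain_nth[OF z])
  show "ab \<in> (\<lambda>(i, j). (z ! i - 1, z ! j - 1)) ` {(i, j). i < n \<and> j < n \<and> z ! i < z ! j \<and> c ! j < c ! i}"
    using ab i j pcomp_pinv_nth[OF z i(1), of c] pcomp_pinv_nth[OF z j(1), of c]
    by (intro image_eqI[of _ _ "(i, j)"]) auto
next
  fix ab
  assume "ab \<in> (\<lambda>(i, j). (z ! i - 1, z ! j - 1)) ` {(i, j). i < n \<and> j < n \<and> z ! i < z ! j \<and> c ! j < c ! i}"
  then show "ab \<in> Inv (pcomp c (pinv z))"
    using Perms_nth[OF z] pcomp_pinv_nth[OF z] pinv_Perms[OF z]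
    by (fastforce simp: Inv_def length_Perms)
qed

lemma weak_le_pcomp_pinv_iff:
  assumes z: "z \<in> Perms n" and c: "length c = n" and y: "length y = n"
  shows "weak_le (pcomp c (pinv z)) y \<longleftrightarrow>
    (\<forall>i<n. \<forall>j<n. z ! i < z ! j \<and> c ! j < c ! i \<longrightarrow> pcomp y z ! j < pcomp y z ! i)"
proof -
  have len: "length (pcomp c (pinv z)) = n" "length z = n"
    using z pinv_Perms[OF z] by (simp_all add: length_Perms)
  have yz: "pcomp y z ! i = y ! (z ! i - 1)" if "i < n" for i
    using that len by (simp add: pcomp_nth)
  have pos: "z ! i - 1 < n" "z ! i - 1 < z ! j - 1 \<longleftrightarrow> z ! i < z ! j" if "i < n" "j < n" for i j
    using Perms_nth[OF z that(1)] Perms_nth[OF z that(2)] by auto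
  show ?thesis
    using Inv_pcomp_pinv[OF z c] pos yz y by (auto simp: weak_le_def Inv_def)
qed

lemma weak_le_pinv_iff:
  assumes z: "z \<in> Perms n" and y: "length y = n"
  shows "weak_le (pinv z) y \<longleftrightarrow>
    (\<forall>i<n. \<forall>j<n. z ! i < z ! j \<and> j < i \<longrightarrow> pcomp y z ! j < pcomp y z ! i)"
  using weak_le_pcomp_pinv_iff[OF z _ y, of "[1..<Suc n]"] pcomp_upt_left[OF pinv_Perms[OF z]]
  by (simp del: upt_Suc)

lemma nth_pcross:
  "i < length u + length v \<Longrightarrow> pcross u v ! i = (if i < length u then u ! i else length u + v ! (i - length u))"
  by (simp add: pcross_def nth_append)

lemma pcross_Perms:
  assumes u: "u \<in> Perms p" and v: "v \<in> Perms q"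
  shows "pcross u v \<in> Perms (p + q)"
proof -
  have "(+) p ` {1..q} = {p + 1..p + q}" by (simp add: image_add_atLeastAtMost)
  then have "set u \<union> (+) p ` set v = {1..p + q}" using u v by (auto simp: Perms_eq)
  then show ?thesis using u v by (simp add: Perms_eq pcross_def)
qed

lemma strict_sorted_nth_less_iff:
  fixes xs :: "'a::linorder list"
  assumes "sorted_wrt (<) xs" and "i < length xs" and "j < length xs"
  shows "xs ! i < xs ! j \<longleftrightarrow> i < j"
proof -
  have less: "xs ! a < xs ! b" if "a < b" "b < length xs" for a b
    using sorted_wrt_nth_less[OF assms(1) that] .
  show ?thesis
    using less[of i j] less[of j i] assms(2,3) by (cases i j rule: linorder_cases) auto
qed

lemma Shuf_nth_less_iff:
  assumes z: "z \<in> Shuf p q" and "i < p + q" and "j < p + q" and "i < p \<longleftrightarrow> j < p"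
  shows "z ! i < z ! j \<longleftrightarrow> i < j"
proof -
  have len: "length z = p + q" using z by (simp add: Shuf_def length_Perms)
  show ?thesis
  proof (cases "i < p")
    case True
    then show ?thesis
      using z assms strict_sorted_nth_less_iff[of "take p z" i j] len by (simp add: Shuf_def)
  next
    case False
    then have "i - p < j - p \<longleftrightarrow> i < j" using assms(4) by auto
    then show ?thesis
      using False z assms strict_sorted_nth_less_iff[of "drop p z" "i - p" "j - p"] len by (simp add: Shuf_def)
  qed
qed

lemma pcross_nth_less_iff:
  assumes u: "u \<in> Perms p" and v: "v \<in> Perms q" and i: "i < p + q" and j: "j < p + q"
  shows "pcross u v ! j < pcross u v ! i \<longleftrightarrow>
    (if j < p then i < p \<longrightarrow> u ! j < u ! i else \<not> i < p \<and> v ! (j - p) < v ! (i - p))"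
proof -
  have "\<not> i < p \<Longrightarrow> i - p < q" "\<not> j < p \<Longrightarrow> j - p < q" using i j by auto
  then show ?thesis
    using i j Perms_nth[OF u, of i] Perms_nth[OF u, of j] Perms_nth[OF v, of "i - p"] Perms_nth[OF v, of "j - p"]
    by (auto simp: nth_pcross length_Perms[OF u] length_Perms[OF v])
qed

lemma Inv_take: "Inv (take p xs) = {(i, j) \<in> Inv xs. j < p}"
  by (auto simp: Inv_def)

lemma Inv_drop: "Inv (drop p xs) = {(i, j). (p + i, p + j) \<in> Inv xs}"
  by (auto simp: Inv_def)

lemma weak_le_st_take_iff:
  assumes "length u = p" and "length xs = p + q"
  shows "weak_le u (st (take p xs)) \<longleftrightarrow> (\<forall>i<p. \<forall>j<p. i < j \<and> u ! j < u ! i \<longrightarrow> xs ! j < xs ! i)"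
  unfolding weak_le_def Inv_st Inv_take using assms by (auto simp: Inv_def)

lemma weak_le_st_drop_iff:
  assumes "length v = q" and "length xs = p + q"
  shows "weak_le v (st (drop p xs)) \<longleftrightarrow>
    (\<forall>i<q. \<forall>j<q. i < j \<and> v ! j < v ! i \<longrightarrow> xs ! (p + j) < xs ! (p + i))"
  unfolding weak_le_def Inv_st Inv_drop using assms by (auto simp: Inv_def)

lemma weak_le_pcross_pinv_iff:
  assumes z: "z \<in> Shuf p q" and u': "u' \<in> Perms p" and v': "v' \<in> Perms q"
    and y: "length y = p + q"
  shows "weak_le (pcomp (pcross u' v') (pinv z)) y \<longleftrightarrow>
    weak_le (pinv z) y \<and> weak_le u' (st (take p (pcomp y z))) \<and> weak_le v' (st (drop p (pcomp y z)))"
proof -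
  let ?c = "pcross u' v'" and ?yz = "pcomp y z"
  have zP: "z \<in> Perms (p + q)" using z by (simp add: Shuf_def)
  have lc: "length ?c = p + q" and lyz: "length ?yz = p + q"
    using u' v' zP by (simp_all add: pcross_def length_Perms)
  note c_less = pcross_nth_less_iff[OF u' v'] and z_less = Shuf_nth_less_iff[OF z]
  show ?thesis
    unfolding weak_le_pcomp_pinv_iff[OF zP lc y] weak_le_pinv_iff[OF zP y]
      weak_le_st_take_iff[OF length_Perms[OF u'] lyz] weak_le_st_drop_iff[OF length_Perms[OF v'] lyz]
  proof (intro iffI conjI allI impI; (elim conjE)?)
    assume H: "\<forall>i<p + q. \<forall>j<p + q. z ! i < z ! j \<and> ?c ! j < ?c ! i \<longrightarrow> ?yz ! j < ?yz ! i"
    fix i j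
    show "?yz ! j < ?yz ! i" if "i < p + q" "j < p + q" "z ! i < z ! j" "j < i"
    proof -
      have "j < p" "\<not> i < p" using that z_less[of i j] by (cases "j < p"; auto)+
      then show ?thesis using H that c_less[of i j] by auto
    qed
    show "?yz ! j < ?yz ! i" if "i < p" "j < p" "i < j" "u' ! j < u' ! i"
      using H that z_less[of i j] c_less[of i j] by auto
    show "?yz ! (p + j) < ?yz ! (p + i)" if "i < q" "j < q" "i < j" "v' ! j < v' ! i"
      using H that z_less[of "p + i" "p + j"] c_less[of "p + i" "p + j"] by auto
  next
    assume cross: "\<forall>i<p + q. \<forall>j<p + q. z ! i < z ! j \<and> j < i \<longrightarrow> ?yz ! j < ?yz ! i"
      and first: "\<forall>i<p. \<forall>j<p. i < j \<and> u' ! j < u' ! i \<longrightarrow> ?yz ! j < ?yz ! i"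
      and second: "\<forall>i<q. \<forall>j<q. i < j \<and> v' ! j < v' ! i \<longrightarrow> ?yz ! (p + j) < ?yz ! (p + i)"
    fix i j assume ij: "i < p + q" "j < p + q" "z ! i < z ! j" "?c ! j < ?c ! i"
    consider "i < p" "j < p" | "\<not> i < p" "j < p" | "\<not> i < p" "\<not> j < p"
      using ij c_less[of i j] by (cases "i < p"; cases "j < p") auto
    then show "?yz ! j < ?yz ! i"
    proof cases
      case 1
      then show ?thesis using first ij z_less[of i j] c_less[of i j] by auto
    next
      case 2
      then show ?thesis using cross ij by auto
    next
      case 3
      then have "i - p < j - p" "v' ! (j - p) < v' ! (i - p)" "i - p < q" "j - p < q"
        using ij z_less[of i j] c_less[of i j] by auto
      then show ?thesis using second 3 by fastforce
    qed
  qed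
qed

lemma finite_Shuf: "finite (Shuf p q)"
  by (rule finite_subset[OF _ finite_Perms]) (auto simp: Shuf_def)

lemma pcomp_pcross_pinv_Perms:
  "u' \<in> Perms p \<Longrightarrow> v' \<in> Perms q \<Longrightarrow> z \<in> Shuf p q \<Longrightarrow> pcomp (pcross u' v') (pinv z) \<in> Perms (p + q)"
  by (intro pcomp_Perms pcross_Perms pinv_Perms) (auto simp: Shuf_def)

lemma
  assumes z: "z \<in> Shuf p q" and y: "y \<in> Perms (p + q)"
  shows st_take_pcomp_Perms: "st (take p (pcomp y z)) \<in> Perms p"
    and st_drop_pcomp_Perms: "st (drop p (pcomp y z)) \<in> Perms q"
proof -
  have yz: "pcomp y z \<in> Perms (p + q)" using z y by (intro pcomp_Perms) (auto simp: Shuf_def)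
  then have "distinct (take p (pcomp y z))" "distinct (drop p (pcomp y z))" by (simp_all add: Perms_def)
  then show "st (take p (pcomp y z)) \<in> Perms p" "st (drop p (pcomp y z)) \<in> Perms q"
    using st_Perms length_Perms[OF yz] by fastforce+
qed

lemma sum_MM_pcross_pinv_weak_le:
  assumes u: "u \<in> Perms p" and v: "v \<in> Perms q" and z: "z \<in> Shuf p q" and y: "y \<in> Perms (p + q)"
  shows "(\<Sum>u'\<in>Perms p. \<Sum>v'\<in>Perms q.
      if weak_le (pcomp (pcross u' v') (pinv z)) y then MM u u' * MM v v' else 0) =
    (if weak_le (pinv z) y \<and> u = st (take p (pcomp y z)) \<and> v = st (drop p (pcomp y z)) then 1 else 0)"
proof -
  define Y1 Y2 where "Y1 = st (take p (pcomp y z))" and "Y2 = st (drop p (pcomp y z))"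
  have "(\<Sum>u'\<in>Perms p. \<Sum>v'\<in>Perms q.
      if weak_le (pcomp (pcross u' v') (pinv z)) y then MM u u' * MM v v' else 0) =
    (\<Sum>u'\<in>Perms p. \<Sum>v'\<in>Perms q. if weak_le (pinv z) y then
      (if weak_le u' Y1 then MM u u' else 0) * (if weak_le v' Y2 then MM v v' else 0) else 0)"
    unfolding Y1_def Y2_def
    by (intro sum.cong refl) (simp add: weak_le_pcross_pinv_iff[OF z _ _ length_Perms[OF y]])
  also have "\<dots> = (if weak_le (pinv z) y then
      (\<Sum>u'\<in>{x \<in> Perms p. weak_le x Y1}. MM u u') * (\<Sum>v'\<in>{x \<in> Perms q. weak_le x Y2}. MM v v')
      else 0)"
    by (simp add: sum_product sum.inter_filter finite_Perms)
  also have "\<dots> = (if weak_le (pinv z) y \<and> u = Y1 \<and> v = Y2 then 1 else 0)"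
  proof -
    have "(\<Sum>u'\<in>{x \<in> Perms p. weak_le x Y1}. MM u u') = (if u = Y1 then 1 else 0)"
      unfolding Y1_def by (rule sum_MM_weak_le[OF u st_take_pcomp_Perms[OF z y]])
    moreover have "(\<Sum>v'\<in>{x \<in> Perms q. weak_le x Y2}. MM v v') = (if v = Y2 then 1 else 0)"
      unfolding Y2_def by (rule sum_MM_weak_le[OF v st_drop_pcomp_Perms[OF z y]])
    ultimately show ?thesis by (cases "u = Y1"; cases "v = Y2") auto
  qed
  finally show ?thesis unfolding Y1_def Y2_def .
qed

lemma Aset_eq:
  assumes u: "u \<in> Perms p" and v: "v \<in> Perms q" and y: "y \<in> Perms (p + q)"
  shows "Aset p q u v y =
    {z \<in> Shuf p q. weak_le (pinv z) y \<and> u = st (take p (pcomp y z)) \<and> v = st (drop p (pcomp y z))}"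
proof (intro equalityI subsetI)
  fix z assume "z \<in> Aset p q u v y"
  then have z: "z \<in> Shuf p q" and below: "weak_le (pcomp (pcross u v) (pinv z)) y"
    and maximal: "\<And>u' v'. u' \<in> Perms p \<Longrightarrow> v' \<in> Perms q \<Longrightarrow> weak_le u u' \<Longrightarrow> weak_le v v' \<Longrightarrow>
       weak_le (pcomp (pcross u' v') (pinv z)) y \<Longrightarrow> u' = u \<and> v' = v"
    by (auto simp: Aset_def)
  let ?Y1 = "st (take p (pcomp y z))" and ?Y2 = "st (drop p (pcomp y z))"
  note iff = weak_le_pcross_pinv_iff[OF z _ _ length_Perms[OF y]]
  have "weak_le (pinv z) y" "weak_le u ?Y1" "weak_le v ?Y2"
    using below iff[OF u v] by auto
  moreover have "?Y1 = u \<and> ?Y2 = v"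
    using maximal[OF st_take_pcomp_Perms[OF z y] st_drop_pcomp_Perms[OF z y]] calculation
      iff[OF st_take_pcomp_Perms[OF z y] st_drop_pcomp_Perms[OF z y]]
    by (simp add: weak_le_def)
  ultimately show "z \<in> {x \<in> Shuf p q.
    weak_le (pinv x) y \<and> u = st (take p (pcomp y x)) \<and> v = st (drop p (pcomp y x))}"
    using z by auto
next
  fix z assume "z \<in> {x \<in> Shuf p q.
    weak_le (pinv x) y \<and> u = st (take p (pcomp y x)) \<and> v = st (drop p (pcomp y x))}"
  then have z: "z \<in> Shuf p q" and top: "weak_le (pinv z) y"
    "u = st (take p (pcomp y z))" "v = st (drop p (pcomp y z))" by auto
  note iff = weak_le_pcross_pinv_iff[OF z _ _ length_Perms[OF y]]
  have "u' = u \<and> v' = v"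
    if "u' \<in> Perms p" "v' \<in> Perms q" "weak_le u u'" "weak_le v v'"
      "weak_le (pcomp (pcross u' v') (pinv z)) y" for u' v'
    using that iff[OF that(1,2)] top weak_le_antisym[OF u] weak_le_antisym[OF v] by auto
  then show "z \<in> Aset p q u v y"
    using z top iff[OF u v] by (auto simp: Aset_def weak_le_def)
qed

lemma sprod_eq_0:
  assumes "x \<notin> Perms (p + q)"
  shows "sprod p q f g x = 0"
  unfolding sprod_def using assms pcomp_pcross_pinv_Perms by (intro sum.neutral ballI) auto

lemma sum_weak_le_sprod:
  "(\<Sum>x\<in>{x \<in> Perms (p + q). weak_le x y}. sprod p q f g x) =
    (\<Sum>z\<in>Shuf p q. \<Sum>u'\<in>Perms p. \<Sum>v'\<in>Perms q.
      if weak_le (pcomp (pcross u' v') (pinv z)) y then f u' * g v' else 0)"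
proof -
  let ?X = "{x \<in> Perms (p + q). weak_le x y}" and ?x = "\<lambda>u' v' z. pcomp (pcross u' v') (pinv z)"
  have "(\<Sum>x\<in>?X. sprod p q f g x) =
      (\<Sum>u'\<in>Perms p. \<Sum>v'\<in>Perms q. \<Sum>z\<in>Shuf p q. \<Sum>x\<in>?X. if ?x u' v' z = x then f u' * g v' else 0)"
    unfolding sprod_def
    by (subst sum.swap, rule sum.cong[OF refl], subst sum.swap, rule sum.cong[OF refl], rule sum.swap)
  also have "\<dots> = (\<Sum>u'\<in>Perms p. \<Sum>v'\<in>Perms q. \<Sum>z\<in>Shuf p q.
      if weak_le (?x u' v' z) y then f u' * g v' else 0)"
    using pcomp_pcross_pinv_Perms by (intro sum.cong refl) (auto simp: finite_Perms)
  also have "\<dots> = (\<Sum>z\<in>Shuf p q. \<Sum>u'\<in>Perms p. \<Sum>v'\<in>Perms q.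
      if weak_le (?x u' v' z) y then f u' * g v' else 0)"
    by (subst sum.swap, rule sum.cong[OF refl], rule sum.swap)
  finally show ?thesis .
qed

theorem mainTheorem7:
  fixes p q :: nat and u v :: "nat list"
  assumes "p \<ge> 1" and "q \<ge> 1" and "u \<in> Perms p" and "v \<in> Perms q"
  shows "sprod p q (MM u) (MM v) = (\<lambda>x. \<Sum>w\<in>Perms (p + q). of_nat (alpha p q u v w) * MM w x)"
proof (rule eq_if_sum_weak_le_eq[where n = "p + q"])
  note u = \<open>u \<in> Perms p\<close> and v = \<open>v \<in> Perms q\<close>
  show "sprod p q (MM u) (MM v) x = 0" if "x \<notin> Perms (p + q)" for x
    using that by (rule sprod_eq_0)
  show "(\<Sum>w\<in>Perms (p + q). of_nat (alpha p q u v w) * MM w x) = 0" if "x \<notin> Perms (p + q)" for x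
    using that by (intro sum.neutral) (auto simp: MM_def length_Perms)
  fix y assume y: "y \<in> Perms (p + q)"
  have "(\<Sum>x\<in>{x \<in> Perms (p + q). weak_le x y}. sprod p q (MM u) (MM v) x) =
      (\<Sum>z\<in>Shuf p q. if weak_le (pinv z) y \<and> u = st (take p (pcomp y z)) \<and> v = st (drop p (pcomp y z))
        then 1 else 0)"
    unfolding sum_weak_le_sprod using sum_MM_pcross_pinv_weak_le[OF u v _ y] by (intro sum.cong) auto
  also have "\<dots> = of_nat (alpha p q u v y)"
    unfolding alpha_def Aset_eq[OF u v y] by (simp add: finite_Shuf flip: sum.inter_filter)
  also have "\<dots> = (\<Sum>x\<in>{x \<in> Perms (p + q). weak_le x y}. \<Sum>w\<in>Perms (p + q). of_nat (alpha p q u v w) * MM w x)"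
    using sum_weak_le_MM_combination[OF y] by simp
  finally show "(\<Sum>x\<in>{x \<in> Perms (p + q). weak_le x y}. sprod p q (MM u) (MM v) x) =
      (\<Sum>x\<in>{x \<in> Perms (p + q). weak_le x y}. \<Sum>w\<in>Perms (p + q). of_nat (alpha p q u v w) * MM w x)" .
qed

end
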